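(* Let $T=\left[\begin{smallmatrix} R & M\\ N & S\end{smallmatrix}\right]$ and $T'=\left[\begin{smallmatrix} R' & M'\\ N' & S'\end{smallmatrix}\right]$ be Morita context rings such that $R'$ and $S'$ are indecomposable rings and at least one of $M'$, $N'$ is nonzero. Then: (1) $\mathrm{Iso}_0^0(T,T')$ equals the set of all semigraded isomorphisms from $T$ to $T'$; (2) $\mathrm{Iso}_0^1(T,T')$ equals the set of all anti-semigraded isomorphisms from $T$ to $T'$. In particular, $\mathrm{Iso}_g(T,T')\subseteq\mathrm{Iso}_0(T,T')$.
   Context: All rings have an identity $1\neq 0$; a ring is indecomposable if its only central idempotents are $0$ and $1$. A Morita context $(R,S,M,N,f,g)$: rings $R,S$, an $R$-$S$-bimodule $M$, an $S$-$R$-bimodule $N$, bimodule morphisms $f:M\otimes_SN\to R$, $g:N\otimes_RM\to S$, with $[m,n]=f(m\otimes n)$, $(n,m)=g(n\otimes m)$ satisfying $[m,n]m'=m(n,m')$ and $n[m,n']=(n,m)n'$. Its Morita context ring $T=\left[\begin{smallmatrix} R & M\\ N & S\end{smallmatrix}\right]$ consists of formal matrices with entrywise addition and product $\left[\begin{smallmatrix} r & m\\ n & s\end{smallmatrix}\right]\left[\begin{smallmatrix} r' & m'\\ n' & s'\end{smallmatrix}\right]=\left[\begin{smallmatrix} rr'+[m,n'] & rm'+ms'\\ nr'+sn' & (n,m')+ss'\end{smallmatrix}\right]$; similarly for $T'$ (pairings also written $[\,,],(\,,)$). Grading: $T_{-1}=\left[\begin{smallmatrix} 0 & 0\\ N &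 0\end{smallmatrix}\right]$, $T_0=\left[\begin{smallmatrix} R & 0\\ 0 & S\end{smallmatrix}\right]$, $T_1=\left[\begin{smallmatrix} 0 & M\\ 0 & 0\end{smallmatrix}\right]$, $T_i=0$ otherwise (same for $T'$). A ring isomorphism $\phi:T\to T'$ is graded if $\phi(T_i)\subseteq T'_i$ for all $i\in\mathbb Z$, anti-graded if $\phi(T_i)\subseteq T'_{-i}$ for all $i$; $\mathrm{Iso}_g(T,T')$ is the set of all graded and anti-graded isomorphisms. $\phi$ is semigraded if $\phi(T_i)\subseteq T'_i$ for $i\in\{-1,1\}$, and anti-semigraded if $\phi(T_i)\subseteq T'_{-i}$ for $i\in\{-1,1\}$. $\mathrm{Iso}_0(T,T')=\mathrm{Iso}_0^0(T,T')\cup\mathrm{Iso}_0^1(T,T')$, where $\mathrm{Iso}_0^0(T,T')$ is the set of maps $\phi\left(\left[\begin{smallmatrix} r & m\\ n & s\end{smallmatrix}\right]\right)=\left[\begin{smallmatrix}\gamma(r) & \gamma(r)m'_0-m'_0\delta(s)+u(m)\\ n'_0\gamma(r)-\delta(s)n'_0+v(n) & \delta(s)\end{smallmatrix}\right]$ with $\gamma:R\to R'$, $\delta:S\to S'$ ring isomorphisms, $u:M\to M'$, $v:N\to N'$ additive bijections with $u(rms)=\gamma(r)u(m)\delta(s)$, $v(snr)=\delta(s)v(n)\gamma(r)$, and $m'_0\in M'$, $n'_0\in N'$ with $[m'_0,N']=0$, $(N',m'_0)=0$, $[M',n'_0]=0$, $(n'_0,M')=0$, $[u(m),v(n)]=\gamma([m,n])$,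 $(v(n),u(m))=\delta((n,m))$; and $\mathrm{Iso}_0^1(T,T')$ is the set of maps $\psi\left(\left[\begin{smallmatrix} r & m\\ n & s\end{smallmatrix}\right]\right)=\left[\begin{smallmatrix}\sigma(s) & m'_*\rho(r)-\sigma(s)m'_*+\nu(n)\\ \rho(r)n'_*-n'_*\sigma(s)+\mu(m) & \rho(r)\end{smallmatrix}\right]$ with $\rho:R\to S'$, $\sigma:S\to R'$ ring isomorphisms, $\mu:M\to N'$, $\nu:N\to M'$ additive bijections with $\mu(rms)=\rho(r)\mu(m)\sigma(s)$, $\nu(snr)=\sigma(s)\nu(n)\rho(r)$, and $m'_*\in M'$, $n'_*\in N'$ with $[m'_*,N']=0$, $(N',m'_* )=0$, $[M',n'_*]=0$, $(n'_*,M')=0$, $(\mu(m),\nu(n))=\rho([m,n])$, $[\nu(n),\mu(m)]=\sigma((n,m))$. All such maps are ring isomorphisms. *)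

theory Defs
  imports Main
begin

text \<open>The rings R, S are the types 'r, 's (class ring_1,
  which includes 1 \<noteq> 0); the bimodules M, N are the abelian groups 'm, 'n together with
  their scalar actions; pf m n = [m,n] and pg n m = (n,m).\<close>

record ('r, 's, 'm, 'n) morita =
  lM :: "'r \<Rightarrow> 'm \<Rightarrow> 'm"
  rM :: "'m \<Rightarrow> 's \<Rightarrow> 'm"
  lN :: "'s \<Rightarrow> 'n \<Rightarrow> 'n"
  rN :: "'n \<Rightarrow> 'r \<Rightarrow> 'n"
  pf :: "'m \<Rightarrow> 'n \<Rightarrow> 'r"
  pg :: "'n \<Rightarrow> 'm \<Rightarrow> 's"

definition bimodule ::
  "('r::ring_1 \<Rightarrow> 'm::ab_group_add \<Rightarrow> 'm) \<Rightarrow> ('m \<Rightarrow> 's::ring_1 \<Rightarrow> 'm) \<Rightarrow> bool" where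
  "bimodule l r \<longleftrightarrow>
     (\<forall>a m m'. l a (m + m') = l a m + l a m') \<and>
     (\<forall>a b m. l (a + b) m = l a m + l b m) \<and>
     (\<forall>a b m. l (a * b) m = l a (l b m)) \<and>
     (\<forall>m. l 1 m = m) \<and>
     (\<forall>s m m'. r (m + m') s = r m s + r m' s) \<and>
     (\<forall>s t m. r m (s + t) = r m s + r m t) \<and>
     (\<forall>s t m. r m (s * t) = r (r m s) t) \<and>
     (\<forall>m. r m 1 = m) \<and>
     (\<forall>a m s. r (l a m) s = l a (r m s))"

definition morita_context :: "('r::ring_1, 's::ring_1, 'm::ab_group_add, 'n::ab_group_add) morita \<Rightarrow> bool" where
  "morita_context C \<longleftrightarrow>
     bimodule (lM C) (rM C) \<and> bimodule (lN C) (rN C) \<and>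
     \<comment> \<open>f : M \<otimes>_S N \<rightarrow> R is a well-defined R-R-bimodule map\<close>
     (\<forall>m m' n. pf C (m + m') n = pf C m n + pf C m' n) \<and>
     (\<forall>m n n'. pf C m (n + n') = pf C m n + pf C m n') \<and>
     (\<forall>m s n. pf C (rM C m s) n = pf C m (lN C s n)) \<and>
     (\<forall>a m n. pf C (lM C a m) n = a * pf C m n) \<and>
     (\<forall>a m n. pf C m (rN C n a) = pf C m n * a) \<and>
     \<comment> \<open>g : N \<otimes>_R M \<rightarrow> S is a well-defined S-S-bimodule map\<close>
     (\<forall>n n' m. pg C (n + n') m = pg C n m + pg C n' m) \<and>
     (\<forall>n m m'. pg C n (m + m') = pg C n m + pg C n m') \<and>
     (\<forall>n a m. pg C (rN C n a) m = pg C n (lM C a m)) \<and>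
     (\<forall>s n m. pg C (lN C s n) m = s * pg C n m) \<and>
     (\<forall>s n m. pg C n (rM C m s) = pg C n m * s) \<and>
     \<comment> \<open>associativity conditions\<close>
     (\<forall>m n m'. lM C (pf C m n) m' = rM C m (pg C n m')) \<and>
     (\<forall>n m n'. rN C n (pf C m n') = lN C (pg C n m) n')"

text \<open>The Morita context ring T: elements are formal matrices (r, m, n, s) standing for
  [[r, m], [n, s]].\<close>

type_synonym ('r, 's, 'm, 'n) mcr = "'r \<times> 'm \<times> 'n \<times> 's"

definition mc_add :: "('r::ring_1, 's::ring_1, 'm::ab_group_add, 'n::ab_group_add) mcr \<Rightarrow> ('r, 's, 'm, 'n) mcr \<Rightarrow> ('r, 's, 'm, 'n) mcr" where
  "mc_add x y = (case x of (r, m, n, s) \<Rightarrow> case y of (r', m', n', s') \<Rightarrow>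
      (r + r', m + m', n + n', s + s'))"

definition mc_mult :: "('r::ring_1, 's::ring_1, 'm::ab_group_add, 'n::ab_group_add) morita \<Rightarrow>
    ('r, 's, 'm, 'n) mcr \<Rightarrow> ('r, 's, 'm, 'n) mcr \<Rightarrow> ('r, 's, 'm, 'n) mcr" where
  "mc_mult C x y = (case x of (r, m, n, s) \<Rightarrow> case y of (r', m', n', s') \<Rightarrow>
      (r * r' + pf C m n', lM C r m' + rM C m s', rN C n r' + lN C s n', pg C n m' + s * s'))"

definition mc_one :: "('r::ring_1, 's::ring_1, 'm::ab_group_add, 'n::ab_group_add) mcr" where
  "mc_one = (1, 0, 0, 1)"

definition mc_zero :: "('r::ring_1, 's::ring_1, 'm::ab_group_add, 'n::ab_group_add) mcr" where
  "mc_zero = (0, 0, 0, 0)"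

definition mc_ring_iso ::
  "('r::ring_1, 's::ring_1, 'm::ab_group_add, 'n::ab_group_add) morita \<Rightarrow>
   ('r2::ring_1, 's2::ring_1, 'm2::ab_group_add, 'n2::ab_group_add) morita \<Rightarrow>
   (('r, 's, 'm, 'n) mcr \<Rightarrow> ('r2, 's2, 'm2, 'n2) mcr) \<Rightarrow> bool" where
  "mc_ring_iso C C' \<phi> \<longleftrightarrow> bij \<phi> \<and>
     (\<forall>x y. \<phi> (mc_add x y) = mc_add (\<phi> x) (\<phi> y)) \<and>
     (\<forall>x y. \<phi> (mc_mult C x y) = mc_mult C' (\<phi> x) (\<phi> y)) \<and>
     \<phi> mc_one = mc_one"

definition ring_iso :: "('a::ring_1 \<Rightarrow> 'b::ring_1) \<Rightarrow> bool" where
  "ring_iso h \<longleftrightarrow> bij h \<and> (\<forall>x y. h (x + y) = h x + h y) \<and>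
     (\<forall>x y. h (x * y) = h x * h y) \<and> h 1 = 1"

definition additive_bij :: "('a::ab_group_add \<Rightarrow> 'b::ab_group_add) \<Rightarrow> bool" where
  "additive_bij h \<longleftrightarrow> bij h \<and> (\<forall>x y. h (x + y) = h x + h y)"

definition indecomposable :: "'a::ring_1 itself \<Rightarrow> bool" where
  "indecomposable _ \<longleftrightarrow>
     (\<forall>e::'a. e * e = e \<and> (\<forall>x. e * x = x * e) \<longrightarrow> e = 0 \<or> e = 1)"

definition mc_comp :: "int \<Rightarrow> ('r::ring_1, 's::ring_1, 'm::ab_group_add, 'n::ab_group_add) mcr set" where
  "mc_comp i =
     (if i = -1 then {(0, 0, n, 0) | n. True}
      else if i = 0 then {(r, 0, 0, s) | r s. True}
      else if i = 1 then {(0, m, 0, 0) | m. True}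
      else {mc_zero})"

definition mc_graded :: "(('r::ring_1, 's::ring_1, 'm::ab_group_add, 'n::ab_group_add) mcr \<Rightarrow>
    ('r2::ring_1, 's2::ring_1, 'm2::ab_group_add, 'n2::ab_group_add) mcr) \<Rightarrow> bool" where
  "mc_graded \<phi> \<longleftrightarrow> (\<forall>i::int. \<phi> ` mc_comp i \<subseteq> mc_comp i)"

definition mc_antigraded :: "(('r::ring_1, 's::ring_1, 'm::ab_group_add, 'n::ab_group_add) mcr \<Rightarrow>
    ('r2::ring_1, 's2::ring_1, 'm2::ab_group_add, 'n2::ab_group_add) mcr) \<Rightarrow> bool" where
  "mc_antigraded \<phi> \<longleftrightarrow> (\<forall>i::int. \<phi> ` mc_comp i \<subseteq> mc_comp (- i))"

definition mc_semigraded :: "(('r::ring_1, 's::ring_1, 'm::ab_group_add, 'n::ab_group_add) mcr \<Rightarrow>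
    ('r2::ring_1, 's2::ring_1, 'm2::ab_group_add, 'n2::ab_group_add) mcr) \<Rightarrow> bool" where
  "mc_semigraded \<phi> \<longleftrightarrow> (\<forall>i::int. i \<in> {-1, 1} \<longrightarrow> \<phi> ` mc_comp i \<subseteq> mc_comp i)"

definition mc_antisemigraded :: "(('r::ring_1, 's::ring_1, 'm::ab_group_add, 'n::ab_group_add) mcr \<Rightarrow>
    ('r2::ring_1, 's2::ring_1, 'm2::ab_group_add, 'n2::ab_group_add) mcr) \<Rightarrow> bool" where
  "mc_antisemigraded \<phi> \<longleftrightarrow> (\<forall>i::int. i \<in> {-1, 1} \<longrightarrow> \<phi> ` mc_comp i \<subseteq> mc_comp (- i))"

definition Iso_g ::
  "('r::ring_1, 's::ring_1, 'm::ab_group_add, 'n::ab_group_add) morita \<Rightarrow>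
   ('r2::ring_1, 's2::ring_1, 'm2::ab_group_add, 'n2::ab_group_add) morita \<Rightarrow>
   (('r, 's, 'm, 'n) mcr \<Rightarrow> ('r2, 's2, 'm2, 'n2) mcr) set" where
  "Iso_g C C' = {\<phi>. mc_ring_iso C C' \<phi> \<and> (mc_graded \<phi> \<or> mc_antigraded \<phi>)}"

definition Iso_00 ::
  "('r::ring_1, 's::ring_1, 'm::ab_group_add, 'n::ab_group_add) morita \<Rightarrow>
   ('r2::ring_1, 's2::ring_1, 'm2::ab_group_add, 'n2::ab_group_add) morita \<Rightarrow>
   (('r, 's, 'm, 'n) mcr \<Rightarrow> ('r2, 's2, 'm2, 'n2) mcr) set" where
  "Iso_00 C C' = {\<phi>. \<exists>(\<gamma>::'r \<Rightarrow> 'r2) (\<delta>::'s \<Rightarrow> 's2) (u::'m \<Rightarrow> 'm2) (v::'n \<Rightarrow> 'n2) m0 n0.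
      ring_iso \<gamma> \<and> ring_iso \<delta> \<and> additive_bij u \<and> additive_bij v \<and>
      (\<forall>r m s. u (rM C (lM C r m) s) = rM C' (lM C' (\<gamma> r) (u m)) (\<delta> s)) \<and>
      (\<forall>s n r. v (rN C (lN C s n) r) = rN C' (lN C' (\<delta> s) (v n)) (\<gamma> r)) \<and>
      (\<forall>n'. pf C' m0 n' = 0) \<and> (\<forall>n'. pg C' n' m0 = 0) \<and>
      (\<forall>m'. pf C' m' n0 = 0) \<and> (\<forall>m'. pg C' n0 m' = 0) \<and>
      (\<forall>m n. pf C' (u m) (v n) = \<gamma> (pf C m n)) \<and>
      (\<forall>m n. pg C' (v n) (u m) = \<delta> (pg C n m)) \<and>
      \<phi> = (\<lambda>(r, m, n, s). (\<gamma> r,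
              lM C' (\<gamma> r) m0 - rM C' m0 (\<delta> s) + u m,
              rN C' n0 (\<gamma> r) - lN C' (\<delta> s) n0 + v n,
              \<delta> s))}"

definition Iso_01 ::
  "('r::ring_1, 's::ring_1, 'm::ab_group_add, 'n::ab_group_add) morita \<Rightarrow>
   ('r2::ring_1, 's2::ring_1, 'm2::ab_group_add, 'n2::ab_group_add) morita \<Rightarrow>
   (('r, 's, 'm, 'n) mcr \<Rightarrow> ('r2, 's2, 'm2, 'n2) mcr) set" where
  "Iso_01 C C' = {\<psi>. \<exists>(\<rho>::'r \<Rightarrow> 's2) (\<sigma>::'s \<Rightarrow> 'r2) (\<mu>::'m \<Rightarrow> 'n2) (\<nu>::'n \<Rightarrow> 'm2) m0 n0.
      ring_iso \<rho> \<and> ring_iso \<sigma> \<and> additive_bij \<mu> \<and> additive_bij \<nu> \<and>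
      (\<forall>r m s. \<mu> (rM C (lM C r m) s) = rN C' (lN C' (\<rho> r) (\<mu> m)) (\<sigma> s)) \<and>
      (\<forall>s n r. \<nu> (rN C (lN C s n) r) = rM C' (lM C' (\<sigma> s) (\<nu> n)) (\<rho> r)) \<and>
      (\<forall>n'. pf C' m0 n' = 0) \<and> (\<forall>n'. pg C' n' m0 = 0) \<and>
      (\<forall>m'. pf C' m' n0 = 0) \<and> (\<forall>m'. pg C' n0 m' = 0) \<and>
      (\<forall>m n. pg C' (\<mu> m) (\<nu> n) = \<rho> (pf C m n)) \<and>
      (\<forall>m n. pf C' (\<nu> n) (\<mu> m) = \<sigma> (pg C n m)) \<and>
      \<psi> = (\<lambda>(r, m, n, s). (\<sigma> s,
              rM C' m0 (\<rho> r) - lM C' (\<sigma> s) m0 + \<nu> n,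
              lN C' (\<rho> r) n0 - rN C' n0 (\<sigma> s) + \<mu> m,
              \<rho> r))}"

definition Iso_0 ::
  "('r::ring_1, 's::ring_1, 'm::ab_group_add, 'n::ab_group_add) morita \<Rightarrow>
   ('r2::ring_1, 's2::ring_1, 'm2::ab_group_add, 'n2::ab_group_add) morita \<Rightarrow>
   (('r, 's, 'm, 'n) mcr \<Rightarrow> ('r2, 's2, 'm2, 'n2) mcr) set" where
  "Iso_0 C C' = Iso_00 C C' \<union> Iso_01 C C'"

end

theory Submission
  imports Defs
begin

text \<open>
  If \<open>\<phi>\<close> is semigraded, the idempotent \<open>e = \<phi>(E\<^sub>1\<^sub>1)\<close> has Peirce
  corners \<open>e T' (1 - e) \<subseteq> T'\<^sub>1\<close> and \<open>(1 - e) T' e \<subseteq> T'\<^sub>-\<^sub>1\<close>.  Read on the diagonal, this makes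
  the diagonal entries \<open>a \<in> R'\<close>, \<open>b \<in> S'\<close> of \<open>e\<close> central idempotents, hence \<open>0\<close> or \<open>1\<close>; the
  cases other than \<open>e = (1, x, y, 0)\<close> contradict injectivity or the nonvanishing of \<open>M'\<close>, \<open>N'\<close>.
  Then \<open>x\<close>, \<open>y\<close> pair trivially with everything, and comparing \<open>\<phi>\<close> on the four corners shows
  that \<open>\<phi>\<close> has the normal form of \<open>Iso\<^sub>0\<^sup>0\<close>.  Conversely every map of that normal form is a
  semigraded isomorphism.  Both directions rest on two general facts: a "triangular" map
  \<open>(r, m, n, s) \<mapsto> (\<gamma> r, \<alpha>(\<gamma> r, \<delta> s) + u m, \<beta>(\<gamma> r, \<delta> s) + v n, \<delta> s)\<close> is bijective iff
  \<open>\<gamma>, \<delta>, u, v\<close> are, and a map in normal form is a ring isomorphism iff its data satisfy the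
  defining conditions of \<open>Iso\<^sub>0\<^sup>0\<close>.  Part (2) is reduced to part (1) by composing with the
  anti-graded isomorphism \<open>\<tau>\<close> of \<open>T'\<close> onto the ring of the transposed context
  \<open>(S', R', N', M')\<close>; the final inclusion follows since graded maps are semigraded.
\<close>

lemma additive_map_simps:
  fixes g :: "'a::ab_group_add \<Rightarrow> 'b::ab_group_add"
  assumes add: "\<And>x y. g (x + y) = g x + g y"
  shows "g 0 = 0" "g (- x) = - g x" "g (x - y) = g x - g y"
proof -
  have "g 0 + g 0 = g 0" using add[of 0 0] by simp
  then show g0: "g 0 = 0" by simp
  have neg: "g (- z) = - g z" for z
    using add[of "- z" z] g0 by (simp add: eq_neg_iff_add_eq_0)
  then show "g (- x) = - g x" .
  show "g (x - y) = g x - g y" using add[of x "- y"] neg[of y] by simp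
qed

definition tri_map ::
  "('r \<Rightarrow> 'r2) \<Rightarrow> ('s \<Rightarrow> 's2) \<Rightarrow> ('m \<Rightarrow> 'm2::ab_group_add) \<Rightarrow> ('n \<Rightarrow> 'n2::ab_group_add) \<Rightarrow>
   ('r2 \<Rightarrow> 's2 \<Rightarrow> 'm2) \<Rightarrow> ('r2 \<Rightarrow> 's2 \<Rightarrow> 'n2) \<Rightarrow> 'r \<times> 'm \<times> 'n \<times> 's \<Rightarrow> 'r2 \<times> 'm2 \<times> 'n2 \<times> 's2" where
  "tri_map \<gamma> \<delta> u v \<alpha> \<beta> = (\<lambda>(r, m, n, s). (\<gamma> r, \<alpha> (\<gamma> r) (\<delta> s) + u m, \<beta> (\<gamma> r) (\<delta> s) + v n, \<delta> s))"

lemma tri_map_apply: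
  "tri_map \<gamma> \<delta> u v \<alpha> \<beta> (r, m, n, s) = (\<gamma> r, \<alpha> (\<gamma> r) (\<delta> s) + u m, \<beta> (\<gamma> r) (\<delta> s) + v n, \<delta> s)"
  by (simp add: tri_map_def)

lemma tri_map_bij_iff:
  fixes \<gamma> :: "'r \<Rightarrow> 'r2" and \<delta> :: "'s \<Rightarrow> 's2"
    and u :: "'m \<Rightarrow> 'm2::ab_group_add" and v :: "'n \<Rightarrow> 'n2::ab_group_add"
  shows "bij (tri_map \<gamma> \<delta> u v \<alpha> \<beta>) \<longleftrightarrow> bij \<gamma> \<and> bij \<delta> \<and> bij u \<and> bij v"
  (is "bij ?t \<longleftrightarrow> _")
proof
  assume bt: "bij ?t"
  then have inj: "?t p = ?t q \<Longrightarrow> p = q" for p q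
    by (simp add: bij_def inj_eq)
  have surj: "\<exists>r m n s. t = ?t (r, m, n, s)" for t
  proof -
    obtain p where "t = ?t p" using bt bij_is_surj surjD by metis
    then show ?thesis by (cases p) blast
  qed
  have "inj \<gamma>" by (rule injI) (use inj[of "(_, m, n, s)" "(_, m, n, s)"] in \<open>simp add: tri_map_apply\<close>)
  moreover have "inj \<delta>" by (rule injI) (use inj[of "(r, m, n, _)" "(r, m, n, _)"] in \<open>simp add: tri_map_apply\<close>)
  moreover have "inj u" by (rule injI) (use inj[of "(r, _, n, s)" "(r, _, n, s)"] in \<open>simp add: tri_map_apply\<close>)
  moreover have "inj v" by (rule injI) (use inj[of "(r, m, _, s)" "(r, m, _, s)"] in \<open>simp add: tri_map_apply\<close>)
  moreover have "surj \<gamma>" "surj \<delta>"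
    unfolding surj_def using surj[of "(R, 0, 0, S)" for R S] by (simp add: tri_map_apply, meson)+
  moreover have "surj u \<and> surj v"
  proof -
    have "\<exists>m n. M = u m \<and> N = v n" for M N and r0 :: 'r and s0 :: 's
    proof -
      obtain r m n s where
        "(\<gamma> r0, \<alpha> (\<gamma> r0) (\<delta> s0) + M, \<beta> (\<gamma> r0) (\<delta> s0) + N, \<delta> s0) = ?t (r, m, n, s)"
        using surj[of "(\<gamma> r0, \<alpha> (\<gamma> r0) (\<delta> s0) + M, \<beta> (\<gamma> r0) (\<delta> s0) + N, \<delta> s0)"]
        by (elim exE) simp
      then show ?thesis by (simp add: tri_map_apply) (metis add_left_cancel)
    qed
    then show ?thesis unfolding surj_def by blast
  qed
  ultimately show "bij \<gamma> \<and> bij \<delta> \<and> bij u \<and> bij v" by (simp add: bij_def)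
next
  assume "bij \<gamma> \<and> bij \<delta> \<and> bij u \<and> bij v"
  then have inv: "\<gamma> (inv \<gamma> R) = R" "\<delta> (inv \<delta> S) = S" "u (inv u M) = M" "v (inv v N) = N"
    and inj: "inj \<gamma>" "inj \<delta>" "inj u" "inj v" for R S M N
    by (auto simp: bij_def surj_f_inv_f)
  have "inj ?t"
    by (rule injI, clarsimp simp: tri_map_def inj[THEN inj_eq] split: prod.splits)
  moreover have "surj ?t"
    unfolding surj_def
  proof
    fix t :: "'r2 \<times> 'm2 \<times> 'n2 \<times> 's2"
    obtain R M N S where t: "t = (R, M, N, S)" by (cases t)
    have "t = ?t (inv \<gamma> R, inv u (M - \<alpha> R S), inv v (N - \<beta> R S), inv \<delta> S)"
      by (simp add: t tri_map_apply inv)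
    then show "\<exists>p. t = ?t p" ..
  qed
  ultimately show "bij ?t" by (simp add: bij_def)
qed

text \<open>An element \<open>a\<close> with \<open>a r (1 - a) = 0 = (1 - a) r a\<close> for all \<open>r\<close> is a central idempotent,
  so in an indecomposable ring it is \<open>0\<close> or \<open>1\<close>.\<close>

lemma Peirce_trivial_idempotent:
  fixes a :: "'a::ring_1"
  assumes indec: "indecomposable TYPE('a)"
    and upper: "\<And>r. a * r * (1 - a) = 0" and lower: "\<And>r. (1 - a) * r * a = 0"
  shows "a = 0 \<or> a = 1"
proof -
  have "a * r = r * a" for r
  proof -
    have "a * r = a * r * a" using upper[of r] by (simp add: right_diff_distrib)
    moreover have "r * a = a * r * a" using lower[of r] by (simp add: left_diff_distrib)
    ultimately show ?thesis by simp
  qed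
  moreover have "a * a = a" using upper[of 1] by (simp add: right_diff_distrib)
  ultimately show ?thesis using indec unfolding indecomposable_def by blast
qed

locale morita_ctx =
  fixes C :: "('r::ring_1, 's::ring_1, 'm::ab_group_add, 'n::ab_group_add) morita"
  assumes ctx: "morita_context C"
begin

lemma lM_add[simp]: "lM C a (m + m') = lM C a m + lM C a m'"
  and lM_add2[simp]: "lM C (a + b) m = lM C a m + lM C b m"
  and lM_mult[simp]: "lM C (a * b) m = lM C a (lM C b m)"
  and lM_1[simp]: "lM C 1 m = m"
  and rM_add[simp]: "rM C (m + m') s = rM C m s + rM C m' s"
  and rM_add2[simp]: "rM C m (s + t) = rM C m s + rM C m t"
  and rM_mult[simp]: "rM C m (s * t) = rM C (rM C m s) t"
  and rM_1[simp]: "rM C m 1 = m"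
  and rM_lM[simp]: "rM C (lM C a m) s = lM C a (rM C m s)"
  using ctx unfolding morita_context_def bimodule_def by auto

lemma lN_add[simp]: "lN C s (n + n') = lN C s n + lN C s n'"
  and lN_add2[simp]: "lN C (s + t) n = lN C s n + lN C t n"
  and lN_mult[simp]: "lN C (s * t) n = lN C s (lN C t n)"
  and lN_1[simp]: "lN C 1 n = n"
  and rN_add[simp]: "rN C (n + n') a = rN C n a + rN C n' a"
  and rN_add2[simp]: "rN C n (a + b) = rN C n a + rN C n b"
  and rN_mult[simp]: "rN C n (a * b) = rN C (rN C n a) b"
  and rN_1[simp]: "rN C n 1 = n"
  and rN_lN[simp]: "rN C (lN C s n) a = lN C s (rN C n a)"
  using ctx unfolding morita_context_def bimodule_def by auto

lemma pf_add[simp]: "pf C (m + m') n = pf C m n + pf C m' n"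
  and pf_add2[simp]: "pf C m (n + n') = pf C m n + pf C m n'"
  and pf_rM[simp]: "pf C (rM C m s) n = pf C m (lN C s n)"
  and pf_lM[simp]: "pf C (lM C a m) n = a * pf C m n"
  and pf_rN[simp]: "pf C m (rN C n a) = pf C m n * a"
  and pg_add[simp]: "pg C (n + n') m = pg C n m + pg C n' m"
  and pg_add2[simp]: "pg C n (m + m') = pg C n m + pg C n m'"
  and pg_rN[simp]: "pg C (rN C n a) m = pg C n (lM C a m)"
  and pg_lN[simp]: "pg C (lN C s n) m = s * pg C n m"
  and pg_rM[simp]: "pg C n (rM C m s) = pg C n m * s"
  and lM_pf[simp]: "lM C (pf C m n) m' = rM C m (pg C n m')"
  and rN_pf[simp]: "rN C n (pf C m n') = lN C (pg C n m) n'"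
  using ctx unfolding morita_context_def by auto

lemmas lM_group[simp] = additive_map_simps[of "lM C a" for a, OF lM_add]
lemmas lM_group2[simp] = additive_map_simps[of "\<lambda>a. lM C a m" for m, OF lM_add2]
lemmas rM_group[simp] = additive_map_simps[of "\<lambda>m. rM C m s" for s, OF rM_add]
lemmas rM_group2[simp] = additive_map_simps[of "rM C m" for m, OF rM_add2]
lemmas lN_group[simp] = additive_map_simps[of "lN C s" for s, OF lN_add]
lemmas lN_group2[simp] = additive_map_simps[of "\<lambda>s. lN C s n" for n, OF lN_add2]
lemmas rN_group[simp] = additive_map_simps[of "\<lambda>n. rN C n a" for a, OF rN_add]
lemmas rN_group2[simp] = additive_map_simps[of "rN C n" for n, OF rN_add2]
lemmas pf_group[simp] = additive_map_simps[of "\<lambda>m. pf C m n" for n, OF pf_add]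
lemmas pf_group2[simp] = additive_map_simps[of "pf C m" for m, OF pf_add2]
lemmas pg_group[simp] = additive_map_simps[of "\<lambda>n. pg C n m" for m, OF pg_add]
lemmas pg_group2[simp] = additive_map_simps[of "pg C n" for n, OF pg_add2]

end

lemma ring_iso_simps:
  assumes "ring_iso h"
  shows "h (x + y) = h x + h y" "h (x * y) = h x * h y" "h 1 = 1" "h 0 = 0" "h (- x) = - h x"
    "h (x - y) = h x - h y"
  using assms additive_map_simps[of h] unfolding ring_iso_def by auto

lemma additive_bij_simps:
  assumes "additive_bij h"
  shows "h (x + y) = h x + h y" "h 0 = 0" "h (- x) = - h x" "h (x - y) = h x - h y"
  using assms additive_map_simps[of h] unfolding additive_bij_def by auto

text \<open>The pair \<open>(m\<^sub>0, n\<^sub>0)\<close> pairs trivially with all of \<open>N\<close> and \<open>M\<close>; these are the translation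
  parameters allowed in \<open>Iso\<^sub>0\<^sup>0\<close>.\<close>

definition pairing_null :: "('r::ring_1, 's::ring_1, 'm::ab_group_add, 'n::ab_group_add) morita \<Rightarrow> 'm \<Rightarrow> 'n \<Rightarrow> bool" where
  "pairing_null C m0 n0 \<longleftrightarrow>
     (\<forall>n. pf C m0 n = 0) \<and> (\<forall>n. pg C n m0 = 0) \<and> (\<forall>m. pf C m n0 = 0) \<and> (\<forall>m. pg C n0 m = 0)"

definition iso00_data ::
  "('r::ring_1, 's::ring_1, 'm::ab_group_add, 'n::ab_group_add) morita \<Rightarrow>
   ('r2::ring_1, 's2::ring_1, 'm2::ab_group_add, 'n2::ab_group_add) morita \<Rightarrow>
   ('r \<Rightarrow> 'r2) \<Rightarrow> ('s \<Rightarrow> 's2) \<Rightarrow> ('m \<Rightarrow> 'm2) \<Rightarrow> ('n \<Rightarrow> 'n2) \<Rightarrow> bool" where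
  "iso00_data C C' \<gamma> \<delta> u v \<longleftrightarrow>
      ring_iso \<gamma> \<and> ring_iso \<delta> \<and> additive_bij u \<and> additive_bij v \<and>
      (\<forall>r m s. u (rM C (lM C r m) s) = rM C' (lM C' (\<gamma> r) (u m)) (\<delta> s)) \<and>
      (\<forall>s n r. v (rN C (lN C s n) r) = rN C' (lN C' (\<delta> s) (v n)) (\<gamma> r)) \<and>
      (\<forall>m n. pf C' (u m) (v n) = \<gamma> (pf C m n)) \<and>
      (\<forall>m n. pg C' (v n) (u m) = \<delta> (pg C n m))"

definition iso00_map ::
  "('r2::ring_1, 's2::ring_1, 'm2::ab_group_add, 'n2::ab_group_add) morita \<Rightarrow>
   ('r \<Rightarrow> 'r2) \<Rightarrow> ('s \<Rightarrow> 's2) \<Rightarrow> ('m \<Rightarrow> 'm2) \<Rightarrow> ('n \<Rightarrow> 'n2) \<Rightarrow> 'm2 \<Rightarrow> 'n2 \<Rightarrow>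
   ('r, 's, 'm, 'n) mcr \<Rightarrow> ('r2, 's2, 'm2, 'n2) mcr" where
  "iso00_map C' \<gamma> \<delta> u v m0 n0 =
     tri_map \<gamma> \<delta> u v (\<lambda>g d. lM C' g m0 - rM C' m0 d) (\<lambda>g d. rN C' n0 g - lN C' d n0)"

lemma iso00_map_apply:
  "iso00_map C' \<gamma> \<delta> u v m0 n0 (r, m, n, s) =
     (\<gamma> r, lM C' (\<gamma> r) m0 - rM C' m0 (\<delta> s) + u m, rN C' n0 (\<gamma> r) - lN C' (\<delta> s) n0 + v n, \<delta> s)"
  by (simp add: iso00_map_def tri_map_apply)

lemma Iso_00_conv:
  "Iso_00 C C' = {\<phi>. \<exists>\<gamma> \<delta> u v m0 n0.
     iso00_data C C' \<gamma> \<delta> u v \<and> pairing_null C' m0 n0 \<and> \<phi> = iso00_map C' \<gamma> \<delta> u v m0 n0}"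
  unfolding Iso_00_def iso00_data_def pairing_null_def iso00_map_def tri_map_def by blast

lemma pairing_null_consequences:
  assumes ctx: "morita_context C" and null: "pairing_null C m0 n0"
  shows "pf C m0 n = 0" "pg C n m0 = 0" "pf C m n0 = 0" "pg C n0 m = 0"
    "pf C m (lN C s n0) = 0" "pg C n (lM C a m0) = 0"
    "rM C m0 (pg C n m) = 0" "lN C (pg C n m) n0 = 0"
proof -
  interpret morita_ctx C by (rule morita_ctx.intro) (rule ctx)
  have z: "\<And>n. pf C m0 n = 0" "\<And>n. pg C n m0 = 0" "\<And>m. pf C m n0 = 0" "\<And>m. pg C n0 m = 0"
    using null unfolding pairing_null_def by auto
  then show "pf C m0 n = 0" "pg C n m0 = 0" "pf C m n0 = 0" "pg C n0 m = 0" by auto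
  show "pf C m (lN C s n0) = 0" using pf_rM[of m s n0] z by simp
  show "pg C n (lM C a m0) = 0" using pg_rN[of n a m0] z by simp
  show "rM C m0 (pg C n m) = 0" using lM_pf[of m0 n m] z by simp
  show "lN C (pg C n m) n0 = 0" using rN_pf[of n m n0] z by simp
qed

lemma iso00_map_semigraded_iso:
  fixes C :: "('r::ring_1, 's::ring_1, 'm::ab_group_add, 'n::ab_group_add) morita"
    and C' :: "('r2::ring_1, 's2::ring_1, 'm2::ab_group_add, 'n2::ab_group_add) morita"
  assumes ctx: "morita_context C" and ctx': "morita_context C'"
    and data: "iso00_data C C' \<gamma> \<delta> u v" and null: "pairing_null C' m0 n0"
  shows "mc_ring_iso C C' (iso00_map C' \<gamma> \<delta> u v m0 n0) \<and> mc_semigraded (iso00_map C' \<gamma> \<delta> u v m0 n0)"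
proof -
  interpret src: morita_ctx C by (rule morita_ctx.intro) (rule ctx)
  interpret tgt: morita_ctx C' by (rule morita_ctx.intro) (rule ctx')
  have g: "ring_iso \<gamma>" and d: "ring_iso \<delta>" and u: "additive_bij u" and v: "additive_bij v"
    and um: "\<And>r m s. u (rM C (lM C r m) s) = rM C' (lM C' (\<gamma> r) (u m)) (\<delta> s)"
    and vn: "\<And>s n r. v (rN C (lN C s n) r) = rN C' (lN C' (\<delta> s) (v n)) (\<gamma> r)"
    and pf_compat[simp]: "\<And>m n. \<gamma> (pf C m n) = pf C' (u m) (v n)"
    and pg_compat[simp]: "\<And>m n. \<delta> (pg C n m) = pg C' (v n) (u m)"
    using data unfolding iso00_data_def by auto
  note [simp] = ring_iso_simps[OF g] ring_iso_simps[OF d] additive_bij_simps[OF u]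
    additive_bij_simps[OF v] pairing_null_consequences[OF ctx' null]
  have [simp]: "u (lM C r m) = lM C' (\<gamma> r) (u m)" "u (rM C m s) = rM C' (u m) (\<delta> s)"
    "v (lN C s n) = lN C' (\<delta> s) (v n)" "v (rN C n r) = rN C' (v n) (\<gamma> r)" for r m s n
    using um[of r m 1] um[of 1 m s] vn[of s n 1] vn[of 1 n r] by simp_all
  let ?p = "iso00_map C' \<gamma> \<delta> u v m0 n0"
  have "?p (mc_add x y) = mc_add (?p x) (?p y)" for x y
    by (cases x; cases y) (simp add: iso00_map_apply mc_add_def algebra_simps)
  moreover have "?p (mc_mult C x y) = mc_mult C' (?p x) (?p y)" for x y
    by (cases x; cases y) (simp add: iso00_map_apply mc_mult_def algebra_simps)
  moreover have "?p mc_one = mc_one"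
    by (simp add: iso00_map_apply mc_one_def)
  moreover have "bij ?p"
    using g d u v unfolding iso00_map_def tri_map_bij_iff ring_iso_def additive_bij_def by simp
  moreover have "mc_semigraded ?p"
    unfolding mc_semigraded_def by (auto simp: mc_comp_def iso00_map_apply)
  ultimately show ?thesis unfolding mc_ring_iso_def by blast
qed

text \<open>Conversely, if a normal-form map with trivially pairing translations is a ring isomorphism,
  its components satisfy the conditions of \<open>Iso\<^sub>0\<^sup>0\<close>: evaluate additivity and multiplicativity
  on matrix units and single-corner matrices.\<close>

lemma iso00_map_ring_iso_data:
  fixes C :: "('r::ring_1, 's::ring_1, 'm::ab_group_add, 'n::ab_group_add) morita"
    and C' :: "('r2::ring_1, 's2::ring_1, 'm2::ab_group_add, 'n2::ab_group_add) morita"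
  assumes ctx: "morita_context C" and ctx': "morita_context C'"
    and null: "pairing_null C' m0 n0" and iso: "mc_ring_iso C C' (iso00_map C' \<gamma> \<delta> u v m0 n0)"
  shows "iso00_data C C' \<gamma> \<delta> u v"
proof -
  interpret src: morita_ctx C by (rule morita_ctx.intro) (rule ctx)
  interpret tgt: morita_ctx C' by (rule morita_ctx.intro) (rule ctx')
  let ?p = "iso00_map C' \<gamma> \<delta> u v m0 n0"
  have add: "?p (mc_add x y) = mc_add (?p x) (?p y)"
    and mult: "?p (mc_mult C x y) = mc_mult C' (?p x) (?p y)"
    and one: "?p mc_one = mc_one" for x y
    using iso unfolding mc_ring_iso_def by blast+
  have bij: "bij \<gamma> \<and> bij \<delta> \<and> bij u \<and> bij v"
    using iso unfolding mc_ring_iso_def iso00_map_def tri_map_bij_iff by auto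
  note [simp] = iso00_map_apply mc_add_def mc_mult_def pairing_null_consequences[OF ctx' null]
  have g_add: "\<gamma> (r + r') = \<gamma> r + \<gamma> r'" and d_add: "\<delta> (s + s') = \<delta> s + \<delta> s'" for r r' s s'
    using add[of "(r, 0, 0, 0)" "(r', 0, 0, 0)"] add[of "(0, 0, 0, s)" "(0, 0, 0, s')"] by simp_all
  note [simp] = additive_map_simps[of \<gamma>, OF g_add] additive_map_simps[of \<delta>, OF d_add]
  have u_add: "u (m + m') = u m + u m'" and v_add: "v (n + n') = v n + v n'" for m m' n n'
    using add[of "(0, m, 0, 0)" "(0, m', 0, 0)"] add[of "(0, 0, n, 0)" "(0, 0, n', 0)"] by simp_all
  note [simp] = additive_map_simps[of u, OF u_add] additive_map_simps[of v, OF v_add]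
  have "ring_iso \<gamma>"
    using bij g_add mult[of "(r, 0, 0, 0)" "(r', 0, 0, 0)" for r r'] one
    unfolding ring_iso_def by (simp add: mc_one_def)
  moreover have "ring_iso \<delta>"
    using bij d_add mult[of "(0, 0, 0, s)" "(0, 0, 0, s')" for s s'] one
    unfolding ring_iso_def by (simp add: mc_one_def)
  moreover have "u (rM C (lM C r m) s) = rM C' (lM C' (\<gamma> r) (u m)) (\<delta> s)" for r m s
  proof -
    have "u (lM C r m') = lM C' (\<gamma> r) (u m')" "u (rM C m' s) = rM C' (u m') (\<delta> s)" for m'
      using mult[of "(r, 0, 0, 0)" "(0, m', 0, 0)"] mult[of "(0, m', 0, 0)" "(0, 0, 0, s)"] by simp_all
    then show ?thesis by simp
  qed
  moreover have "v (rN C (lN C s n) r) = rN C' (lN C' (\<delta> s) (v n)) (\<gamma> r)" for r n s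
  proof -
    have "v (lN C s n') = lN C' (\<delta> s) (v n')" "v (rN C n' r) = rN C' (v n') (\<gamma> r)" for n'
      using mult[of "(0, 0, 0, s)" "(0, 0, n', 0)"] mult[of "(0, 0, n', 0)" "(r, 0, 0, 0)"] by simp_all
    then show ?thesis by simp
  qed
  moreover have "pf C' (u m) (v n) = \<gamma> (pf C m n)" "pg C' (v n) (u m) = \<delta> (pg C n m)" for m n
    using mult[of "(0, m, 0, 0)" "(0, 0, n, 0)"] mult[of "(0, 0, n, 0)" "(0, m, 0, 0)"] by simp_all
  ultimately show ?thesis
    using bij u_add v_add unfolding iso00_data_def additive_bij_def by blast
qed

lemma mc_comp_pm1:
  "x \<in> mc_comp 1 \<longleftrightarrow> (\<exists>m. x = (0, m, 0, 0))"
  "x \<in> mc_comp (-1) \<longleftrightarrow> (\<exists>n. x = (0, 0, n, 0))"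
  by (auto simp: mc_comp_def)

locale semigraded_iso =
  src: morita_ctx C + tgt: morita_ctx C'
  for C :: "('r::ring_1, 's::ring_1, 'm::ab_group_add, 'n::ab_group_add) morita"
    and C' :: "('r2::ring_1, 's2::ring_1, 'm2::ab_group_add, 'n2::ab_group_add) morita" +
  fixes \<phi> :: "('r, 's, 'm, 'n) mcr \<Rightarrow> ('r2, 's2, 'm2, 'n2) mcr"
  assumes iso: "mc_ring_iso C C' \<phi>" and semigraded: "mc_semigraded \<phi>"
begin

lemma phi_add: "\<phi> (mc_add p q) = mc_add (\<phi> p) (\<phi> q)"
  and phi_mult: "\<phi> (mc_mult C p q) = mc_mult C' (\<phi> p) (\<phi> q)"
  and phi_one: "\<phi> mc_one = mc_one"
  using iso unfolding mc_ring_iso_def by blast+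

lemma phi_eq_iff: "\<phi> p = \<phi> q \<longleftrightarrow> p = q"
  using iso unfolding mc_ring_iso_def bij_def by (blast dest: injD)

lemma phi_surj: "\<exists>p. t = \<phi> p"
  using iso unfolding mc_ring_iso_def by (blast dest: bij_is_surj intro: surjD)

lemma phi_zero: "\<phi> (0, 0, 0, 0) = (0, 0, 0, 0)"
proof -
  have "mc_add (\<phi> (0, 0, 0, 0)) (\<phi> (0, 0, 0, 0)) = \<phi> (0, 0, 0, 0)"
    using phi_add[of "(0, 0, 0, 0)" "(0, 0, 0, 0)"] by (simp add: mc_add_def)
  then show ?thesis by (cases "\<phi> (0, 0, 0, 0)") (simp add: mc_add_def)
qed

lemma phi_upper: "\<exists>m'. \<phi> (0, m, 0, 0) = (0, m', 0, 0)"
  using semigraded unfolding mc_semigraded_def by (force simp: mc_comp_pm1)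

lemma phi_lower: "\<exists>n'. \<phi> (0, 0, n, 0) = (0, 0, n', 0)"
  using semigraded unfolding mc_semigraded_def by (force simp: mc_comp_pm1)

lemma E22_image:
  assumes e: "\<phi> (1, 0, 0, 0) = (a, x, y, b)"
  shows "\<phi> (0, 0, 0, 1) = (1 - a, - x, - y, 1 - b)"
proof -
  obtain a' x' y' b' where f: "\<phi> (0, 0, 0, 1) = (a', x', y', b')" by (cases "\<phi> (0, 0, 0, 1)")
  have "mc_add (\<phi> (1, 0, 0, 0)) (\<phi> (0, 0, 0, 1)) = mc_one"
    using phi_add[of "(1, 0, 0, 0)" "(0, 0, 0, 1)"] phi_one by (simp add: mc_add_def mc_one_def)
  then have "a + a' = 1" "x + x' = 0" "y + y' = 0" "b + b' = 1"
    by (simp_all add: e f mc_add_def mc_one_def)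
  then show ?thesis by (simp add: f eq_neg_iff_add_eq_0 add.commute algebra_simps)
qed

text \<open>Since \<open>E\<^sub>1\<^sub>1 T E\<^sub>2\<^sub>2 = T\<^sub>1\<close> and \<open>E\<^sub>2\<^sub>2 T E\<^sub>1\<^sub>1 = T\<^sub>-\<^sub>1\<close>, the Peirce corners of \<open>T'\<close> with respect
  to the idempotent \<open>e\<close> lie in the homogeneous components \<open>T'\<^sub>1\<close> and \<open>T'\<^sub>-\<^sub>1\<close>.\<close>

lemma Peirce_upper:
  assumes e: "\<phi> (1, 0, 0, 0) = (a, x, y, b)"
  shows "mc_mult C' (mc_mult C' (a, x, y, b) t) (1 - a, - x, - y, 1 - b) \<in> mc_comp 1"
proof -
  obtain r m n s where t: "t = \<phi> (r, m, n, s)" using phi_surj by (metis prod_cases4)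
  have "mc_mult C' (mc_mult C' (a, x, y, b) t) (1 - a, - x, - y, 1 - b) =
      \<phi> (mc_mult C (mc_mult C (1, 0, 0, 0) (r, m, n, s)) (0, 0, 0, 1))"
    by (simp add: phi_mult t e E22_image[OF e])
  also have "\<dots> = \<phi> (0, m, 0, 0)" by (simp add: mc_mult_def)
  finally show ?thesis using phi_upper[of m] by (auto simp: mc_comp_pm1)
qed

lemma Peirce_lower:
  assumes e: "\<phi> (1, 0, 0, 0) = (a, x, y, b)"
  shows "mc_mult C' (mc_mult C' (1 - a, - x, - y, 1 - b) t) (a, x, y, b) \<in> mc_comp (-1)"
proof -
  obtain r m n s where t: "t = \<phi> (r, m, n, s)" using phi_surj by (metis prod_cases4)
  have "mc_mult C' (mc_mult C' (1 - a, - x, - y, 1 - b) t) (a, x, y, b) =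
      \<phi> (mc_mult C (mc_mult C (0, 0, 0, 1) (r, m, n, s)) (1, 0, 0, 0))"
    by (simp add: phi_mult t e E22_image[OF e])
  also have "\<dots> = \<phi> (0, 0, n, 0)" by (simp add: mc_mult_def)
  finally show ?thesis using phi_lower[of n] by (auto simp: mc_comp_pm1)
qed

lemma E11_image_diagonal_Peirce:
  assumes e: "\<phi> (1, 0, 0, 0) = (a, x, y, b)"
  shows "a * r * (1 - a) = 0" "(1 - a) * r * a = 0" "b * s * (1 - b) = 0" "(1 - b) * s * b = 0"
  using Peirce_upper[OF e, of "(r, 0, 0, 0)"] Peirce_lower[OF e, of "(r, 0, 0, 0)"]
    Peirce_upper[OF e, of "(0, 0, 0, s)"] Peirce_lower[OF e, of "(0, 0, 0, s)"]
  by (simp_all add: mc_mult_def mc_comp_pm1)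

text \<open>The images of \<open>E\<^sub>1\<^sub>1\<close> and \<open>E\<^sub>2\<^sub>2\<close> are nonzero idempotents, so neither has zero diagonal.\<close>

lemma E11_image_not_scalar:
  assumes e: "\<phi> (1, 0, 0, 0) = (a, x, y, b)"
  shows "\<not> (a = 0 \<and> b = 0)" "\<not> (a = 1 \<and> b = 1)"
proof -
  let ?f = "(1 - a, - x, - y, 1 - b)"
  have "mc_mult C' (a, x, y, b) (a, x, y, b) = (a, x, y, b)" "mc_mult C' ?f ?f = ?f"
    using phi_mult[of "(1, 0, 0, 0)" "(1, 0, 0, 0)"] phi_mult[of "(0, 0, 0, 1)" "(0, 0, 0, 1)"]
    by (simp_all add: e E22_image[OF e] mc_mult_def)
  moreover have "(a, x, y, b) \<noteq> (0, 0, 0, 0)" "?f \<noteq> (0, 0, 0, 0)"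
    using phi_eq_iff[of _ "(0, 0, 0, 0)"] phi_zero e E22_image[OF e] by (metis prod.inject zero_neq_one)+
  ultimately show "\<not> (a = 0 \<and> b = 0)" "\<not> (a = 1 \<and> b = 1)"
    by (auto simp: mc_mult_def)
qed

lemma E11_image_not_swapped:
  fixes m :: 'm2 and n :: 'n2
  assumes e: "\<phi> (1, 0, 0, 0) = (0, x, y, 1)"
  shows "m = 0" "n = 0"
  using Peirce_lower[OF e, of "(0, m, 0, 0)"] Peirce_upper[OF e, of "(0, 0, n, 0)"]
  by (simp_all add: mc_mult_def mc_comp_pm1)

lemma E11_image_shape:
  assumes e: "\<phi> (1, 0, 0, 0) = (a, x, y, b)"
    and indec: "indecomposable TYPE('r2)" "indecomposable TYPE('s2)"
    and nonzero: "(\<exists>m::'m2. m \<noteq> 0) \<or> (\<exists>n::'n2. n \<noteq> 0)"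
  shows "a = 1 \<and> b = 0"
proof -
  have "a = 0 \<or> a = 1" "b = 0 \<or> b = 1"
    using Peirce_trivial_idempotent[OF indec(1)] Peirce_trivial_idempotent[OF indec(2)]
      E11_image_diagonal_Peirce[OF e] by blast+
  moreover have "\<not> (a = 0 \<and> b = 1)"
    using E11_image_not_swapped[of x y] nonzero e by blast
  ultimately show ?thesis using E11_image_not_scalar[OF e] by blast
qed

lemma E11_image_pairing_null:
  assumes e: "\<phi> (1, 0, 0, 0) = (1, x, y, 0)"
  shows "pairing_null C' x y"
  using Peirce_lower[OF e, of "(0, 0, n, 0)" for n] Peirce_upper[OF e, of "(0, m, 0, 0)" for m]
  unfolding pairing_null_def by (simp add: mc_mult_def mc_comp_pm1)

text \<open>With \<open>e = (1, x, y, 0)\<close>, the relations \<open>E\<^sub>1\<^sub>1 r = r = r E\<^sub>1\<^sub>1\<close> and \<open>E\<^sub>2\<^sub>2 s = s = s E\<^sub>2\<^sub>2\<close> pin down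
  the images of the diagonal corners up to their diagonal entries.\<close>

lemma R_corner_image:
  assumes e: "\<phi> (1, 0, 0, 0) = (1, x, y, 0)"
  shows "\<exists>g. \<phi> (r, 0, 0, 0) = (g, lM C' g x, rN C' y g, 0)"
proof -
  obtain g m n s where h: "\<phi> (r, 0, 0, 0) = (g, m, n, s)" by (cases "\<phi> (r, 0, 0, 0)")
  have "(g, m, n, s) = mc_mult C' (g, m, n, s) (1, x, y, 0)"
    using phi_mult[of "(r, 0, 0, 0)" "(1, 0, 0, 0)"] by (simp add: h e mc_mult_def[of C])
  moreover have "(g, m, n, s) = mc_mult C' (1, x, y, 0) (g, m, n, s)"
    using phi_mult[of "(1, 0, 0, 0)" "(r, 0, 0, 0)"] by (simp add: h e mc_mult_def[of C])
  ultimately show ?thesis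
    by (simp add: h mc_mult_def pairing_null_consequences[OF tgt.ctx E11_image_pairing_null[OF e]])
qed

lemma S_corner_image:
  assumes e: "\<phi> (1, 0, 0, 0) = (1, x, y, 0)"
  shows "\<exists>d. \<phi> (0, 0, 0, s) = (0, - rM C' x d, - lN C' d y, d)"
proof -
  have f: "\<phi> (0, 0, 0, 1) = (0, - x, - y, 1)" using E22_image[OF e] by simp
  obtain g m n d where h: "\<phi> (0, 0, 0, s) = (g, m, n, d)" by (cases "\<phi> (0, 0, 0, s)")
  have "(g, m, n, d) = mc_mult C' (g, m, n, d) (0, - x, - y, 1)"
    using phi_mult[of "(0, 0, 0, s)" "(0, 0, 0, 1)"] by (simp add: h f mc_mult_def[of C])
  moreover have "(g, m, n, d) = mc_mult C' (0, - x, - y, 1) (g, m, n, d)"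
    using phi_mult[of "(0, 0, 0, 1)" "(0, 0, 0, s)"] by (simp add: h f mc_mult_def[of C])
  ultimately show ?thesis
    by (simp add: h mc_mult_def pairing_null_consequences[OF tgt.ctx E11_image_pairing_null[OF e]])
qed

lemma phi_is_iso00_map:
  assumes e: "\<phi> (1, 0, 0, 0) = (1, x, y, 0)"
  shows "\<exists>\<gamma> \<delta> u v. \<phi> = iso00_map C' \<gamma> \<delta> u v x y"
proof -
  obtain \<gamma> where \<gamma>: "\<And>r. \<phi> (r, 0, 0, 0) = (\<gamma> r, lM C' (\<gamma> r) x, rN C' y (\<gamma> r), 0)"
    using R_corner_image[OF e] by metis
  obtain \<delta> where \<delta>: "\<And>s. \<phi> (0, 0, 0, s) = (0, - rM C' x (\<delta> s), - lN C' (\<delta> s) y, \<delta> s)"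
    using S_corner_image[OF e] by metis
  obtain u where u: "\<And>m. \<phi> (0, m, 0, 0) = (0, u m, 0, 0)" using phi_upper by metis
  obtain v where v: "\<And>n. \<phi> (0, 0, n, 0) = (0, 0, v n, 0)" using phi_lower by metis
  have "\<phi> (r, m, n, s) = iso00_map C' \<gamma> \<delta> u v x y (r, m, n, s)" for r m n s
  proof -
    have "(r, m, n, s) = mc_add (mc_add (r, 0, 0, 0) (0, m, 0, 0)) (mc_add (0, 0, n, 0) (0, 0, 0, s))"
      by (simp add: mc_add_def)
    then have "\<phi> (r, m, n, s) =
        mc_add (mc_add (\<phi> (r, 0, 0, 0)) (\<phi> (0, m, 0, 0))) (mc_add (\<phi> (0, 0, n, 0)) (\<phi> (0, 0, 0, s)))"
      by (metis phi_add)
    then show ?thesis by (simp add: \<gamma> \<delta> u v iso00_map_apply mc_add_def)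
  qed
  then show ?thesis by (metis prod_cases4 ext)
qed

theorem semigraded_iso_in_Iso_00:
  assumes indec: "indecomposable TYPE('r2)" "indecomposable TYPE('s2)"
    and nonzero: "(\<exists>m::'m2. m \<noteq> 0) \<or> (\<exists>n::'n2. n \<noteq> 0)"
  shows "\<phi> \<in> Iso_00 C C'"
proof -
  obtain a x y b where e: "\<phi> (1, 0, 0, 0) = (a, x, y, b)" by (cases "\<phi> (1, 0, 0, 0)")
  with E11_image_shape[OF e indec nonzero] have e1: "\<phi> (1, 0, 0, 0) = (1, x, y, 0)" by simp
  have null: "pairing_null C' x y" by (rule E11_image_pairing_null[OF e1])
  obtain \<gamma> \<delta> u v where \<phi>: "\<phi> = iso00_map C' \<gamma> \<delta> u v x y" using phi_is_iso00_map[OF e1] by blast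
  have "iso00_data C C' \<gamma> \<delta> u v"
    using iso00_map_ring_iso_data[OF src.ctx tgt.ctx null] iso by (simp add: \<phi>)
  with null \<phi> show ?thesis unfolding Iso_00_conv by blast
qed

end

theorem Iso_00_char:
  fixes C :: "('r::ring_1, 's::ring_1, 'm::ab_group_add, 'n::ab_group_add) morita"
    and C' :: "('r2::ring_1, 's2::ring_1, 'm2::ab_group_add, 'n2::ab_group_add) morita"
  assumes ctx: "morita_context C" and ctx': "morita_context C'"
    and indec: "indecomposable TYPE('r2)" "indecomposable TYPE('s2)"
    and nonzero: "(\<exists>m::'m2. m \<noteq> 0) \<or> (\<exists>n::'n2. n \<noteq> 0)"
  shows "Iso_00 C C' = {\<phi>. mc_ring_iso C C' \<phi> \<and> mc_semigraded \<phi>}"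
proof
  show "Iso_00 C C' \<subseteq> {\<phi>. mc_ring_iso C C' \<phi> \<and> mc_semigraded \<phi>}"
    using iso00_map_semigraded_iso[OF ctx ctx'] unfolding Iso_00_conv by blast
  have "\<phi> \<in> Iso_00 C C'" if iso: "mc_ring_iso C C' \<phi>" and sg: "mc_semigraded \<phi>" for \<phi>
  proof -
    interpret semigraded_iso C C' \<phi>
      by (intro semigraded_iso.intro morita_ctx.intro semigraded_iso_axioms.intro ctx ctx' iso sg)
    show ?thesis by (rule semigraded_iso_in_Iso_00[OF indec nonzero])
  qed
  then show "{\<phi>. mc_ring_iso C C' \<phi> \<and> mc_semigraded \<phi>} \<subseteq> Iso_00 C C'" by blast
qed

definition flip :: "('r, 's, 'm, 'n) morita \<Rightarrow> ('s, 'r, 'n, 'm) morita" where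
  "flip C = \<lparr>lM = lN C, rM = rN C, lN = lM C, rN = rM C, pf = pg C, pg = pf C\<rparr>"

definition tau :: "('r, 's, 'm, 'n) mcr \<Rightarrow> ('s, 'r, 'n, 'm) mcr" where
  "tau = (\<lambda>(r, m, n, s). (s, n, m, r))"

lemma flip_simps[simp]:
  "lM (flip C) = lN C" "rM (flip C) = rN C" "lN (flip C) = lM C"
  "rN (flip C) = rM C" "pf (flip C) = pg C" "pg (flip C) = pf C"
  by (simp_all add: flip_def)

lemma flip_flip[simp]: "flip (flip C) = C"
  by (simp add: flip_def)

lemma flip_context: "morita_context C \<Longrightarrow> morita_context (flip C)"
  unfolding morita_context_def by simp

lemma tau_tau[simp]: "tau (tau p) = p"
  by (cases p) (simp add: tau_def)

lemma tau_comp_tau[simp]: "tau \<circ> (tau \<circ> \<phi>) = \<phi>"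
  by (simp add: comp_def)

lemma tau_ring_iso: "mc_ring_iso C C' \<psi> \<Longrightarrow> mc_ring_iso C (flip C') (tau \<circ> \<psi>)"
  unfolding mc_ring_iso_def
proof (elim conjE, intro conjI allI)
  assume "bij \<psi>" and add: "\<forall>x y. \<psi> (mc_add x y) = mc_add (\<psi> x) (\<psi> y)"
    and mult: "\<forall>x y. \<psi> (mc_mult C x y) = mc_mult C' (\<psi> x) (\<psi> y)" and one: "\<psi> mc_one = mc_one"
  have "bij tau" by (rule o_bij[of tau]) (simp_all add: fun_eq_iff)
  with \<open>bij \<psi>\<close> show "bij (tau \<circ> \<psi>)" by (rule bij_comp)
  have tau_add: "tau (mc_add p q) = mc_add (tau p) (tau q)" for p q
    by (cases p; cases q) (simp add: tau_def mc_add_def)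
  show "(tau \<circ> \<psi>) (mc_add x y) = mc_add ((tau \<circ> \<psi>) x) ((tau \<circ> \<psi>) y)" for x y
    by (simp only: comp_apply tau_add add[rule_format])
  have tau_mult: "tau (mc_mult C' p q) = mc_mult (flip C') (tau p) (tau q)" for p q
    by (cases p; cases q) (simp add: tau_def mc_mult_def add.commute)
  show "(tau \<circ> \<psi>) (mc_mult C x y) = mc_mult (flip C') ((tau \<circ> \<psi>) x) ((tau \<circ> \<psi>) y)" for x y
    by (simp only: comp_apply tau_mult mult[rule_format])
  show "(tau \<circ> \<psi>) mc_one = mc_one" using one by (simp add: tau_def mc_one_def)
qed

lemma tau_swaps_grading:
  "mc_antisemigraded \<psi> \<Longrightarrow> mc_semigraded (tau \<circ> \<psi>)"
  "mc_semigraded \<phi> \<Longrightarrow> mc_antisemigraded (tau \<circ> \<phi>)"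
proof -
  have "tau ` mc_comp i = mc_comp (- i)" for i
    by (auto simp: mc_comp_def tau_def mc_zero_def image_iff)
  then show "mc_antisemigraded \<psi> \<Longrightarrow> mc_semigraded (tau \<circ> \<psi>)"
    and "mc_semigraded \<phi> \<Longrightarrow> mc_antisemigraded (tau \<circ> \<phi>)"
    unfolding mc_semigraded_def mc_antisemigraded_def image_comp[symmetric]
    by (metis image_mono minus_minus)+
qed

lemma tau_iso00_map:
  "tau \<circ> iso00_map (flip C') \<rho> \<sigma> \<mu> \<nu> n0 m0 = (\<lambda>(r, m, n, s). (\<sigma> s,
     rM C' m0 (\<rho> r) - lM C' (\<sigma> s) m0 + \<nu> n, lN C' (\<rho> r) n0 - rN C' n0 (\<sigma> s) + \<mu> m, \<rho> r))"
  by (auto simp: fun_eq_iff tau_def iso00_map_apply)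

lemma Iso_01_conv: "Iso_01 C C' = (\<lambda>\<phi>. tau \<circ> \<phi>) ` Iso_00 C (flip C')"
proof -
  have "Iso_01 C C' = {\<psi>. \<exists>\<rho> \<sigma> \<mu> \<nu> m0 n0. iso00_data C (flip C') \<rho> \<sigma> \<mu> \<nu> \<and>
      pairing_null (flip C') n0 m0 \<and> \<psi> = tau \<circ> iso00_map (flip C') \<rho> \<sigma> \<mu> \<nu> n0 m0}"
    unfolding Iso_01_def iso00_data_def pairing_null_def tau_iso00_map flip_simps by blast
  also have "\<dots> = (\<lambda>\<phi>. tau \<circ> \<phi>) ` Iso_00 C (flip C')"
    unfolding Iso_00_conv by blast
  finally show ?thesis .
qed

theorem Iso_01_char:
  fixes C :: "('r::ring_1, 's::ring_1, 'm::ab_group_add, 'n::ab_group_add) morita"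
    and C' :: "('r2::ring_1, 's2::ring_1, 'm2::ab_group_add, 'n2::ab_group_add) morita"
  assumes ctx: "morita_context C" and ctx': "morita_context C'"
    and indec: "indecomposable TYPE('r2)" "indecomposable TYPE('s2)"
    and nonzero: "(\<exists>m::'m2. m \<noteq> 0) \<or> (\<exists>n::'n2. n \<noteq> 0)"
  shows "Iso_01 C C' = {\<psi>. mc_ring_iso C C' \<psi> \<and> mc_antisemigraded \<psi>}"
proof -
  have "Iso_01 C C' = (\<lambda>\<phi>. tau \<circ> \<phi>) ` {\<phi>. mc_ring_iso C (flip C') \<phi> \<and> mc_semigraded \<phi>}"
    using Iso_00_char[OF ctx flip_context[OF ctx'] indec(2,1)] nonzero by (simp add: Iso_01_conv disj_commute)
  also have "\<dots> = {\<psi>. mc_ring_iso C C' \<psi> \<and> mc_antisemigraded \<psi>}"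
  proof (intro equalityI subsetI)
    fix \<psi> assume "\<psi> \<in> (\<lambda>\<phi>. tau \<circ> \<phi>) ` {\<phi>. mc_ring_iso C (flip C') \<phi> \<and> mc_semigraded \<phi>}"
    then show "\<psi> \<in> {\<psi>. mc_ring_iso C C' \<psi> \<and> mc_antisemigraded \<psi>}"
      using tau_ring_iso[of C "flip C'"] tau_swaps_grading(2) by auto
  next
    fix \<psi> assume "\<psi> \<in> {\<psi>. mc_ring_iso C C' \<psi> \<and> mc_antisemigraded \<psi>}"
    then have "tau \<circ> \<psi> \<in> {\<phi>. mc_ring_iso C (flip C') \<phi> \<and> mc_semigraded \<phi>}"
      using tau_ring_iso tau_swaps_grading(1) by blast
    then show "\<psi> \<in> (\<lambda>\<phi>. tau \<circ> \<phi>) ` {\<phi>. mc_ring_iso C (flip C') \<phi> \<and> mc_semigraded \<phi>}"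
      by (metis (no_types, lifting) image_eqI tau_comp_tau)
  qed
  finally show ?thesis .
qed

theorem theorem3p6:
  fixes C :: "('r::ring_1, 's::ring_1, 'm::ab_group_add, 'n::ab_group_add) morita"
    and C' :: "('r2::ring_1, 's2::ring_1, 'm2::ab_group_add, 'n2::ab_group_add) morita"
  assumes "morita_context C"
    and "morita_context C'"
    and "indecomposable TYPE('r2)"
    and "indecomposable TYPE('s2)"
    and "(\<exists>m::'m2. m \<noteq> 0) \<or> (\<exists>n::'n2. n \<noteq> 0)"
  shows "Iso_00 C C' = {\<phi>. mc_ring_iso C C' \<phi> \<and> mc_semigraded \<phi>} \<and>
         Iso_01 C C' = {\<phi>. mc_ring_iso C C' \<phi> \<and> mc_antisemigraded \<phi>} \<and>
         Iso_g C C' \<subseteq> Iso_0 C C'"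
proof -
  have Iso_00: "Iso_00 C C' = {\<phi>. mc_ring_iso C C' \<phi> \<and> mc_semigraded \<phi>}"
    using Iso_00_char assms by blast
  have Iso_01: "Iso_01 C C' = {\<phi>. mc_ring_iso C C' \<phi> \<and> mc_antisemigraded \<phi>}"
    using Iso_01_char assms by blast
  have "mc_graded \<phi> \<Longrightarrow> mc_semigraded \<phi>" and "mc_antigraded \<phi> \<Longrightarrow> mc_antisemigraded \<phi>"
    for \<phi> :: "('r, 's, 'm, 'n) mcr \<Rightarrow> ('r2, 's2, 'm2, 'n2) mcr"
    unfolding mc_graded_def mc_antigraded_def mc_semigraded_def mc_antisemigraded_def by blast+
  then have "Iso_g C C' \<subseteq> Iso_0 C C'"
    unfolding Iso_g_def Iso_0_def Iso_00 Iso_01 by blast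
  with Iso_00 Iso_01 show ?thesis by blast
qed

end
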